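(* Let $W$ be a binary symmetric channel (input and output alphabet $\{0,1\}$, crossover probability $p$), $N=2^n$, and $0\le i\le N-1$. Then for every $\mathbf{y}\in\mathbb{F}_2^N$ there exists $\mathbf{v}\in\mathbb{F}_2^N$ with $v_{i+1}=\dots=v_N=0$ and $W_N^{(i)}(\mathbf{v})=W_N^{(i)}(\mathbf{y})$. Consequently the set of values $\{W_N^{(i)}(\mathbf{y}):\mathbf{y}\in\mathbb{F}_2^N\}$ equals $\{W_N^{(i)}(\mathbf{y}):\mathbf{y}\in\mathbb{F}_2^N,\ y_{i+1}^N=0\}$, and the number of equivalence classes is at most $2^i$.
   Context: $G_N=F^{\otimes n}$ with $F=\begin{pmatrix}1&0\\1&1\end{pmatrix}$ over $\mathbb{F}_2$; $A(N,i)$ is the submatrix of rows $i+1,\dots,N$ of $G_N$, with row space $\mathrm{row}(A(N,i))$. For the BSC, $W^N(\mathbf{y}|\mathbf{x})=\prod_j W(y_j|x_j)$ with $W(y|x)=1-p$ if $y=x$ and $p$ otherwise. Define $W_N^{(i)}(\mathbf{y})=\frac{1}{2^{N-1}}\sum_{\mathbf{c}\in\mathrm{row}(A(N,i))}W^N(\mathbf{y}|\mathbf{c})$ (the transition probability of bit channel $i$ with all previous bits and the current bit equal to $0$). Equivalence classes: classes of vectors with equal value of $W_N^{(i)}$. *)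

theory Defs
  imports Complex_Main
begin

text \<open>Vectors in F_2^N are functions nat => bool (True = 1), indices 0..N-1
  (paper index k corresponds to index k-1 here), zero outside.\<close>

definition vecs :: "nat \<Rightarrow> (nat \<Rightarrow> bool) set" where
  "vecs N = {v. \<forall>j\<ge>N. \<not> v j}"

text \<open>The kernel F = [[1,0],[1,1]] over F_2, entries indexed by 0,1.\<close>
definition Fker :: "nat \<Rightarrow> nat \<Rightarrow> bool" where
  "Fker a b \<longleftrightarrow> a < 2 \<and> b < 2 \<and> b \<le> a"

text \<open>Kronecker power G_{2^n} = F^{(x)n} = F (x) F^{(x)(n-1)}, entries (0-indexed row r, column c).\<close>
fun Gmat :: "nat \<Rightarrow> nat \<Rightarrow> nat \<Rightarrow> bool" where
  "Gmat 0 r c \<longleftrightarrow> r = 0 \<and> c = 0"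
| "Gmat (Suc n) r c \<longleftrightarrow>
     Fker (r div 2^n) (c div 2^n) \<and> Gmat n (r mod 2^n) (c mod 2^n)"

definition Grow :: "nat \<Rightarrow> nat \<Rightarrow> (nat \<Rightarrow> bool)" where
  "Grow n r = (\<lambda>c. c < 2^n \<and> Gmat n r c)"

text \<open>Row space over F_2 of A(N,i) = rows i+1..N (1-indexed), i.e. rows i..N-1 (0-indexed):
  all F_2-linear combinations, i.e. sums of subsets of these rows.\<close>
definition rowA :: "nat \<Rightarrow> nat \<Rightarrow> (nat \<Rightarrow> bool) set" where
  "rowA n i = {(\<lambda>c. odd (card {r \<in> S. Grow n r c})) | S. S \<subseteq> {i..<2^n}}"

definition WN :: "real \<Rightarrow> nat \<Rightarrow> (nat \<Rightarrow> bool) \<Rightarrow> (nat \<Rightarrow> bool) \<Rightarrow> real" where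
  "WN p N y x = (\<Prod>j<N. if y j = x j then 1 - p else p)"

definition Wbit :: "real \<Rightarrow> nat \<Rightarrow> nat \<Rightarrow> (nat \<Rightarrow> bool) \<Rightarrow> real" where
  "Wbit p n i y = (1 / 2 ^ (2^n - 1)) * (\<Sum>c\<in>rowA n i. WN p (2^n) y c)"

end

theory Submission
  imports Defs
begin

text \<open>The row space C of A(N,i) is a binary linear code, and the BSC likelihood satisfies
  W^N(y + c | d) = W^N(y | c + d); since d \<mapsto> c + d permutes C for c \<in> C, the bit-channel
  value W_N^{(i)} is constant on cosets y + C. As G_N is lower triangular with unit diagonal,
  adding rows N-1, N-2, ..., i as needed clears the coordinates N-1, ..., i of y one at a
  time from the top, so every coset contains a vector supported on the first i coordinates,
  and there are only 2^i of those.\<close>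

lemma Gmat_lower_triangular: "Gmat n r c \<Longrightarrow> c \<le> r"
proof (induction n arbitrary: r c)
  case 0
  then show ?case by simp
next
  case (Suc n)
  then have "c div 2^n \<le> r div 2^n" and "c mod 2^n \<le> r mod 2^n"
    by (auto simp: Fker_def)
  then have "2^n * (c div 2^n) + c mod 2^n \<le> 2^n * (r div 2^n) + r mod 2^n"
    by (intro add_mono) auto
  then show ?case by simp
qed

lemma Gmat_diag: "r < 2^n \<Longrightarrow> Gmat n r r"
proof (induction n arbitrary: r)
  case 0
  then show ?case by simp
next
  case (Suc n)
  then have "r div 2^n < 2" by (simp add: less_mult_imp_div_less mult.commute)
  with Suc show ?case by (simp add: Fker_def)
qed

lemma Grow_diag: "r < 2^n \<Longrightarrow> Grow n r r"
  by (simp add: Grow_def Gmat_diag)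

lemma Grow_above_diag: "r < c \<Longrightarrow> \<not> Grow n r c"
  using Gmat_lower_triangular by (fastforce simp: Grow_def)

lemma odd_card_sym_diff:
  assumes "finite A" "finite B"
  shows "odd (card (sym_diff A B)) \<longleftrightarrow> odd (card A) \<noteq> odd (card B)"
proof -
  have "card (sym_diff A B \<union> (A \<inter> B)) = card (sym_diff A B) + card (A \<inter> B)"
    by (rule card_Un_disjoint) (use assms in auto)
  moreover have "sym_diff A B \<union> (A \<inter> B) = A \<union> B" by blast
  moreover have "card A + card B = card (A \<union> B) + card (A \<inter> B)"
    using assms by (rule card_Un_Int)
  ultimately have "card A + card B = card (sym_diff A B) + 2 * card (A \<inter> B)"
    by simp
  then show ?thesis by (metis even_add even_mult_iff even_numeral)
qed

definition row_sum :: "nat \<Rightarrow> nat set \<Rightarrow> nat \<Rightarrow> bool" where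
  "row_sum n S = (\<lambda>c. odd (card {r \<in> S. Grow n r c}))"

lemma rowA_eq_row_sum_image: "rowA n i = row_sum n ` Pow {i..<2^n}"
  unfolding rowA_def row_sum_def by blast

lemma row_sum_empty: "row_sum n {} = (\<lambda>c. False)"
  by (simp add: row_sum_def)

lemma row_sum_singleton: "row_sum n {r} = Grow n r"
proof
  fix c
  have "{r' \<in> {r}. Grow n r' c} = (if Grow n r c then {r} else {})" by auto
  then show "row_sum n {r} c = Grow n r c" by (simp add: row_sum_def)
qed

lemma row_sum_sym_diff:
  assumes "finite S" "finite T"
  shows "row_sum n (sym_diff S T) = (\<lambda>c. row_sum n S c \<noteq> row_sum n T c)"
proof
  fix c
  have "{r \<in> sym_diff S T. Grow n r c} =
        sym_diff {r \<in> S. Grow n r c} {r \<in> T. Grow n r c}"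
    by blast
  then show "row_sum n (sym_diff S T) c = (row_sum n S c \<noteq> row_sum n T c)"
    unfolding row_sum_def using assms by (simp add: odd_card_sym_diff)
qed

lemma rowA_add_closed:
  assumes "c \<in> rowA n i" "d \<in> rowA n i"
  shows "(\<lambda>j. c j \<noteq> d j) \<in> rowA n i"
proof -
  obtain S T where S: "S \<subseteq> {i..<2^n}" "c = row_sum n S" and T: "T \<subseteq> {i..<2^n}" "d = row_sum n T"
    using assms unfolding rowA_eq_row_sum_image by blast
  moreover have "finite S" "finite T"
    using S(1) T(1) by (auto intro: finite_subset)
  ultimately have "(\<lambda>j. c j \<noteq> d j) = row_sum n (sym_diff S T)"
    by (simp add: row_sum_sym_diff)
  moreover have "sym_diff S T \<subseteq> {i..<2^n}" using S T by blast
  ultimately show ?thesis unfolding rowA_eq_row_sum_image by blast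
qed

lemma WN_add: "WN p N (\<lambda>j. y j \<noteq> c j) d = WN p N y (\<lambda>j. c j \<noteq> d j)"
  unfolding WN_def by (intro prod.cong) auto

lemma Wbit_add_codeword:
  assumes "c \<in> rowA n i"
  shows "Wbit p n i (\<lambda>j. y j \<noteq> c j) = Wbit p n i y"
proof -
  have "(\<Sum>d\<in>rowA n i. WN p (2^n) (\<lambda>j. y j \<noteq> c j) d)
      = (\<Sum>d\<in>rowA n i. WN p (2^n) y (\<lambda>j. c j \<noteq> d j))"
    by (intro sum.cong refl) (rule WN_add)
  also have "\<dots> = (\<Sum>d\<in>rowA n i. WN p (2^n) y d)"
    by (rule sum.reindex_bij_witness[of _ "\<lambda>d j. c j \<noteq> d j" "\<lambda>d j. c j \<noteq> d j"])
       (use rowA_add_closed[OF assms] in auto)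
  finally show ?thesis unfolding Wbit_def by simp
qed

lemma exists_row_sum_matching_tail:
  assumes "i \<le> k" "k \<le> 2^n" "\<forall>j\<ge>k. \<not> y j"
  shows "\<exists>S \<subseteq> {i..<k}. \<forall>j\<ge>i. y j = row_sum n S j"
  using assms
proof (induction k arbitrary: y rule: dec_induct)
  case base
  then show ?case by (intro exI[of _ "{}"]) (simp add: row_sum_empty)
next
  case (step k)
  have k_le: "k \<le> 2^n" using step.prems(1) by simp
  show ?case
  proof (cases "y k")
    case False
    have "\<forall>j\<ge>k. \<not> y j"
    proof (intro allI impI)
      fix j
      assume "k \<le> j"
      then consider "j = k" | "Suc k \<le> j" by linarith
      then show "\<not> y j" using False step.prems(2) by cases auto
    qed
    from step.IH[OF k_le this] obtain S where "S \<subseteq> {i..<k}" "\<forall>j\<ge>i. y j = row_sum n S j"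
      by blast
    then show ?thesis by (intro exI[of _ S]) auto
  next
    case True
    define y' where "y' = (\<lambda>j. y j \<noteq> Grow n k j)"
    have "\<forall>j\<ge>k. \<not> y' j"
    proof (intro allI impI)
      fix j
      assume "k \<le> j"
      then consider "j = k" | "Suc k \<le> j" by linarith
      then show "\<not> y' j"
        using True step.prems Grow_diag[of k n] Grow_above_diag[of k j n] by cases (auto simp: y'_def)
    qed
    from step.IH[OF k_le this] obtain S where S: "S \<subseteq> {i..<k}" "\<forall>j\<ge>i. y' j = row_sum n S j"
      by blast
    then have "insert k S = sym_diff S {k}" by auto
    moreover have "finite S" using S(1) by (auto intro: finite_subset)
    ultimately have "row_sum n (insert k S) = (\<lambda>j. row_sum n S j \<noteq> Grow n k j)"
      by (simp add: row_sum_sym_diff row_sum_singleton)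
    then have "\<forall>j\<ge>i. y j = row_sum n (insert k S) j"
      using S(2) by (auto simp: y'_def)
    moreover have "insert k S \<subseteq> {i..<Suc k}" using S(1) step.hyps by auto
    ultimately show ?thesis by blast
  qed
qed

lemma card_vanishing_from: "card {y :: nat \<Rightarrow> bool. \<forall>j\<ge>i. \<not> y j} = 2^i"
proof -
  have "bij_betw (\<lambda>S j. j \<in> S) (Pow {..<i}) {y. \<forall>j\<ge>i. \<not> y j}"
    by (rule bij_betw_byWitness[where f' = "\<lambda>y. {j. y j}"])
       (auto simp: not_less[symmetric])
  then show ?thesis by (simp add: bij_betw_same_card[symmetric] card_Pow)
qed

lemma card_image_vanishing_from_le:
  "card (f ` {y \<in> A. \<forall>j. i \<le> j \<longrightarrow> \<not> y j}) \<le> 2^i"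
proof -
  let ?Z = "{y :: nat \<Rightarrow> bool. \<forall>j\<ge>i. \<not> y j}"
  have fin: "finite ?Z"
    using card_vanishing_from[of i] by (intro card_ge_0_finite) simp
  have sub: "{y \<in> A. \<forall>j. i \<le> j \<longrightarrow> \<not> y j} \<subseteq> ?Z" by auto
  have "card (f ` {y \<in> A. \<forall>j. i \<le> j \<longrightarrow> \<not> y j}) \<le> card {y \<in> A. \<forall>j. i \<le> j \<longrightarrow> \<not> y j}"
    using finite_subset[OF sub fin] by (rule card_image_le)
  also have "\<dots> \<le> card ?Z"
    using fin sub by (rule card_mono)
  finally show ?thesis by (simp only: card_vanishing_from)
qed

lemma Wbit_coset_representative:
  assumes "i \<le> 2^n" "y \<in> vecs (2^n)"
  shows "\<exists>v\<in>vecs (2^n). (\<forall>j. i \<le> j \<longrightarrow> \<not> v j) \<and> Wbit p n i v = Wbit p n i y"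
proof -
  have "\<forall>j\<ge>2^n. \<not> y j" using assms(2) by (simp add: vecs_def)
  then obtain S where S: "S \<subseteq> {i..<2^n}" "\<forall>j\<ge>i. y j = row_sum n S j"
    using exists_row_sum_matching_tail[of i "2^n" n y] assms(1) by blast
  define v where "v = (\<lambda>j. y j \<noteq> row_sum n S j)"
  have "row_sum n S \<in> rowA n i" using S(1) unfolding rowA_eq_row_sum_image by blast
  then have "Wbit p n i v = Wbit p n i y" unfolding v_def by (rule Wbit_add_codeword)
  moreover have "v \<in> vecs (2^n)"
    using assms(2) by (auto simp: v_def vecs_def row_sum_def Grow_def)
  moreover have "\<forall>j. i \<le> j \<longrightarrow> \<not> v j" using S(2) by (simp add: v_def)
  ultimately show ?thesis by blast
qed

theorem corollary2:
  fixes p :: real and n i :: nat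
  assumes "0 \<le> p" and "p \<le> 1" and "i < 2^n"
  shows "(\<forall>y\<in>vecs (2^n). \<exists>v\<in>vecs (2^n). (\<forall>j. i \<le> j \<longrightarrow> \<not> v j)
              \<and> Wbit p n i v = Wbit p n i y)
     \<and> Wbit p n i ` vecs (2^n) = Wbit p n i ` {y \<in> vecs (2^n). \<forall>j. i \<le> j \<longrightarrow> \<not> y j}
     \<and> card (Wbit p n i ` vecs (2^n)) \<le> 2^i"
proof -
  have representative: "\<forall>y\<in>vecs (2^n). \<exists>v\<in>vecs (2^n). (\<forall>j. i \<le> j \<longrightarrow> \<not> v j)
              \<and> Wbit p n i v = Wbit p n i y"
    using assms(3) by (simp add: Wbit_coset_representative)
  have values_eq:
    "Wbit p n i ` vecs (2^n) = Wbit p n i ` {y \<in> vecs (2^n). \<forall>j. i \<le> j \<longrightarrow> \<not> y j}"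
  proof (rule subset_antisym)
    show "Wbit p n i ` vecs (2^n) \<subseteq> Wbit p n i ` {y \<in> vecs (2^n). \<forall>j. i \<le> j \<longrightarrow> \<not> y j}"
      using representative by (fastforce simp: image_iff)
  qed blast
  with representative show ?thesis
    by (simp add: card_image_vanishing_from_le)
qed

end
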